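(* Let $\rho$ be a mixed memory over a set $Y$ of program variables and let $X\subseteq Y$. Let $\mathbf{u}$ be a fresh unentangled ghost of the same type as $X$ and define $\mathrm{class}(X) := (X\equiv_{cl}\mathbf{u})$. Then $\rho\models\mathrm{class}(X)$ iff $\rho$ is classical in $X$, i.e., $\rho=\sum_i |i\rangle\langle i|_X\otimes\rho_i$ for some mixed memories $\rho_i$ over $Y\setminus X$.
   Context: Variables have types and are of three disjoint kinds: program variables, entangled ghosts, unentangled ghosts. $\ell^2[V]$ is the Hilbert space with orthonormal basis indexed by assignments on $V$; $\ell^2[V\cup W]\cong\ell^2[V]\otimes\ell^2[W]$. Mixed memories over $V$ are positive trace-class operators on $\ell^2[V]$; $\mathrm{tr}_W$ is partial trace. A mixed memory over $V\cup W$ is $(V,W)$-separable if it is a convergent sum $\sum_i\rho_i\otimes\rho_i'$ of mixed memories over $V$ and $W$. $\mathrm{supp}\,\rho$ is the closure of the range of $\rho$. A predicate over $V$ is a closed subspace of $\ell^2[V]$; predicates over different variable sets are identified if they agree after tensoring with the full spaces of missing variables. Classical equality: for disjoint lists $W,W'\subseteq V$ of the same type $T$, $W\equiv_{cl}W'$ is the closed span of all $|i\rangle_W\otimes|i\rangle_{W'}\otimes\psi$ with $i\in T$ and $\psi\in\ell^2[V\setminus(W\cup W')]$. For program variables $X$, entangled ghosts $E$, unentangled ghosts $U$ and a predicate $A$ over $X\cup E\cup U$, a mixed memory $\rho$ over $X$ satisfies $A$ ($\rho\models A$) iff there exists an $(X\cup E,U)$-separable mixed memory $\rho^\circ$ over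 $X\cup E\cup U$ with $\mathrm{supp}\,\rho^\circ\subseteq A$ and $\mathrm{tr}_{E\cup U}\rho^\circ=\rho$. *)

theory Defs
  imports "HOL-Analysis.Analysis"
begin

(* Variables have type 'v, values have type 'val; T x is the type (set of values) of variable x.
   An assignment on V is a function that is typed on V and equals undefined outside V. *)

definition asg :: "('v \<Rightarrow> 'val set) \<Rightarrow> 'v set \<Rightarrow> ('v \<Rightarrow> 'val) set" where
  "asg T V = {m. (\<forall>x\<in>V. m x \<in> T x) \<and> (\<forall>x. x \<notin> V \<longrightarrow> m x = undefined)}"

definition restr :: "'v set \<Rightarrow> ('v \<Rightarrow> 'val) \<Rightarrow> ('v \<Rightarrow> 'val)" where
  "restr V m = (\<lambda>x. if x \<in> V then m x else undefined)"

definition merge :: "'v set \<Rightarrow> ('v \<Rightarrow> 'val) \<Rightarrow> ('v \<Rightarrow> 'val) \<Rightarrow> ('v \<Rightarrow> 'val)" where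
  "merge W a c = (\<lambda>x. if x \<in> W then c x else a x)"

definition ell2 :: "('v \<Rightarrow> 'val set) \<Rightarrow> 'v set \<Rightarrow> (('v \<Rightarrow> 'val) \<Rightarrow> complex) set" where
  "ell2 T V = {\<psi>. (\<forall>m. m \<notin> asg T V \<longrightarrow> \<psi> m = 0) \<and> (\<lambda>m. (cmod (\<psi> m))^2) summable_on UNIV}"

definition l2norm :: "(('v \<Rightarrow> 'val) \<Rightarrow> complex) \<Rightarrow> real" where
  "l2norm \<psi> = sqrt (\<Sum>\<^sub>\<infinity>m. (cmod (\<psi> m))^2)"

(* Operators on ell2[V] are represented by their matrix entries K a b = <e_a, K e_b>.
   A mixed memory over V: positive trace-class operator, i.e. a kernel supported on asg V x asg V
   that is positive semidefinite and has summable diagonal (its trace). *)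
definition mixed :: "('v \<Rightarrow> 'val set) \<Rightarrow> 'v set \<Rightarrow> (('v \<Rightarrow> 'val) \<Rightarrow> ('v \<Rightarrow> 'val) \<Rightarrow> complex) \<Rightarrow> bool" where
  "mixed T V K \<longleftrightarrow>
     (\<forall>a b. a \<notin> asg T V \<or> b \<notin> asg T V \<longrightarrow> K a b = 0) \<and>
     (\<forall>F c. finite F \<longrightarrow> F \<subseteq> asg T V \<longrightarrow>
        Im (\<Sum>a\<in>F. \<Sum>b\<in>F. cnj (c a) * K a b * c b) = 0 \<and>
        Re (\<Sum>a\<in>F. \<Sum>b\<in>F. cnj (c a) * K a b * c b) \<ge> 0) \<and>
     (\<lambda>a. Re (K a a)) summable_on asg T V"

definition tensor :: "('v \<Rightarrow> 'val set) \<Rightarrow> 'v set \<Rightarrow> 'v set \<Rightarrow>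
    (('v \<Rightarrow> 'val) \<Rightarrow> ('v \<Rightarrow> 'val) \<Rightarrow> complex) \<Rightarrow> (('v \<Rightarrow> 'val) \<Rightarrow> ('v \<Rightarrow> 'val) \<Rightarrow> complex) \<Rightarrow>
    (('v \<Rightarrow> 'val) \<Rightarrow> ('v \<Rightarrow> 'val) \<Rightarrow> complex)" where
  "tensor T V W K L = (\<lambda>a b. if a \<in> asg T (V \<union> W) \<and> b \<in> asg T (V \<union> W)
       then K (restr V a) (restr V b) * L (restr W a) (restr W b) else 0)"

definition ptrace :: "('v \<Rightarrow> 'val set) \<Rightarrow> 'v set \<Rightarrow> 'v set \<Rightarrow>
    (('v \<Rightarrow> 'val) \<Rightarrow> ('v \<Rightarrow> 'val) \<Rightarrow> complex) \<Rightarrow> (('v \<Rightarrow> 'val) \<Rightarrow> ('v \<Rightarrow> 'val) \<Rightarrow> complex)" where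
  "ptrace T V W K = (\<lambda>a b. if a \<in> asg T V \<and> b \<in> asg T V
       then (\<Sum>\<^sub>\<infinity>c\<in>asg T W. K (merge W a c) (merge W b c)) else 0)"

definition separable :: "('v \<Rightarrow> 'val set) \<Rightarrow> 'v set \<Rightarrow> 'v set \<Rightarrow>
    (('v \<Rightarrow> 'val) \<Rightarrow> ('v \<Rightarrow> 'val) \<Rightarrow> complex) \<Rightarrow> bool" where
  "separable T V W K \<longleftrightarrow> (\<exists>R L. (\<forall>i::nat. mixed T V (R i) \<and> mixed T W (L i)) \<and>
       (\<forall>a b. ((\<lambda>i. tensor T V W (R i) (L i) a b) has_sum K a b) UNIV))"

definition kapply :: "(('v \<Rightarrow> 'val) \<Rightarrow> ('v \<Rightarrow> 'val) \<Rightarrow> complex) \<Rightarrow> (('v \<Rightarrow> 'val) \<Rightarrow> complex) \<Rightarrow> (('v \<Rightarrow> 'val) \<Rightarrow> complex)" where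
  "kapply K \<psi> = (\<lambda>a. \<Sum>\<^sub>\<infinity>b. K a b * \<psi> b)"

definition l2closure :: "('v \<Rightarrow> 'val set) \<Rightarrow> 'v set \<Rightarrow> (('v \<Rightarrow> 'val) \<Rightarrow> complex) set \<Rightarrow> (('v \<Rightarrow> 'val) \<Rightarrow> complex) set" where
  "l2closure T V S = {\<psi> \<in> ell2 T V. \<exists>f. (\<forall>n::nat. f n \<in> S) \<and> (\<lambda>n. l2norm (\<lambda>a. f n a - \<psi> a)) \<longlonglongrightarrow> 0}"

definition supp :: "('v \<Rightarrow> 'val set) \<Rightarrow> 'v set \<Rightarrow> (('v \<Rightarrow> 'val) \<Rightarrow> ('v \<Rightarrow> 'val) \<Rightarrow> complex) \<Rightarrow> (('v \<Rightarrow> 'val) \<Rightarrow> complex) set" where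
  "supp T V K = l2closure T V (kapply K ` ell2 T V)"

(* predicate over V = closed subspace of ell2[V] *)
definition closed_subspace :: "('v \<Rightarrow> 'val set) \<Rightarrow> 'v set \<Rightarrow> (('v \<Rightarrow> 'val) \<Rightarrow> complex) set \<Rightarrow> bool" where
  "closed_subspace T V A \<longleftrightarrow> A \<subseteq> ell2 T V \<and> (\<lambda>_. 0) \<in> A \<and>
     (\<forall>\<phi>\<in>A. \<forall>\<psi>\<in>A. (\<lambda>a. \<phi> a + \<psi> a) \<in> A) \<and> (\<forall>c. \<forall>\<psi>\<in>A. (\<lambda>a. c * \<psi> a) \<in> A) \<and>
     (\<forall>f \<psi>. (\<forall>n::nat. f n \<in> A) \<longrightarrow> \<psi> \<in> ell2 T V \<longrightarrow> (\<lambda>n. l2norm (\<lambda>a. f n a - \<psi> a)) \<longlonglongrightarrow> 0 \<longrightarrow> \<psi> \<in> A)"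

definition closed_span :: "('v \<Rightarrow> 'val set) \<Rightarrow> 'v set \<Rightarrow> (('v \<Rightarrow> 'val) \<Rightarrow> complex) set \<Rightarrow> (('v \<Rightarrow> 'val) \<Rightarrow> complex) set" where
  "closed_span T V S = \<Inter>{A. closed_subspace T V A \<and> S \<subseteq> A}"

(* Classical equality X \<equiv>cl u over V, where the type of the single variable u is identified with
   the type of X (the assignments on X) via the bijection enc:
   closed span of |i>_X \<otimes> |enc i>_u \<otimes> \<psi>,  i \<in> asg X, \<psi> \<in> ell2[V - X - {u}] *)
definition cl_eq :: "('v \<Rightarrow> 'val set) \<Rightarrow> 'v set \<Rightarrow> 'v set \<Rightarrow> 'v \<Rightarrow> (('v \<Rightarrow> 'val) \<Rightarrow> 'val) \<Rightarrow>
    (('v \<Rightarrow> 'val) \<Rightarrow> complex) set" where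
  "cl_eq T V X u enc = closed_span T V
     {\<phi>. \<exists>i\<in>asg T X. \<exists>\<psi>\<in>ell2 T (V - X - {u}).
        \<phi> = (\<lambda>a. if a \<in> asg T V \<and> restr X a = i \<and> a u = enc i
                  then \<psi> (restr (V - X - {u}) a) else 0)}"

definition sat :: "('v \<Rightarrow> 'val set) \<Rightarrow> 'v set \<Rightarrow> 'v set \<Rightarrow> 'v set \<Rightarrow> (('v \<Rightarrow> 'val) \<Rightarrow> complex) set \<Rightarrow>
    (('v \<Rightarrow> 'val) \<Rightarrow> ('v \<Rightarrow> 'val) \<Rightarrow> complex) \<Rightarrow> bool" where
  "sat T Y E U A \<rho> \<longleftrightarrow> (\<exists>\<rho>o. mixed T (Y \<union> E \<union> U) \<rho>o \<and> separable T (Y \<union> E) U \<rho>o \<and>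
       supp T (Y \<union> E \<union> U) \<rho>o \<subseteq> A \<and> ptrace T Y (E \<union> U) \<rho>o = \<rho>)"

definition classical_in :: "('v \<Rightarrow> 'val set) \<Rightarrow> 'v set \<Rightarrow> 'v set \<Rightarrow>
    (('v \<Rightarrow> 'val) \<Rightarrow> ('v \<Rightarrow> 'val) \<Rightarrow> complex) \<Rightarrow> bool" where
  "classical_in T Y X \<rho> \<longleftrightarrow> (\<exists>R. (\<forall>i\<in>asg T X. mixed T (Y - X) (R i)) \<and>
     (\<forall>a b. ((\<lambda>i. tensor T X (Y - X) (\<lambda>a' b'. if a' = i \<and> b' = i then 1 else 0) (R i) a b)
              has_sum \<rho> a b) (asg T X)))"

end

theory Submission
  imports Defs
begin

(*
  A vector lies in X \<equiv>cl u exactly when it vanishes off the graph G = {a. a u = enc (a|X)},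
  and the support of a positive kernel lies in such a coordinate subspace exactly when all of its
  columns do.  So a witness rho_o of rho |= class(X) vanishes outside G x G (by hermiticity), and
  tracing out u only pairs entries whose X-parts have the same encoding: as enc is injective, rho
  is block diagonal with respect to X, which is the same as being classical in X.

  Conversely, copying the X-part of a block-diagonal rho into u gives a positive kernel on G x G
  with partial trace rho.  It is the sum, over the countably many values i of X at which the
  diagonal of rho does not vanish, of the i-th block of rho tensored with the projection onto
  enc i, hence it is separable with respect to the ghost.
*)

section \<open>Assignments\<close>

lemma asg_eqI:
  assumes "a \<in> asg T V" and "b \<in> asg T V" and "\<And>x. x \<in> V \<Longrightarrow> a x = b x"
  shows "a = b"
proof
  fix x
  show "a x = b x" using assms unfolding asg_def by (cases "x \<in> V") auto
qed

lemma asg_undefined: "a \<in> asg T V \<Longrightarrow> x \<notin> V \<Longrightarrow> a x = undefined"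
  unfolding asg_def by blast

lemma restr_in_asg: "a \<in> asg T V \<Longrightarrow> W \<subseteq> V \<Longrightarrow> restr W a \<in> asg T W"
  unfolding asg_def restr_def by auto

lemma merge_in_asg: "a \<in> asg T V \<Longrightarrow> c \<in> asg T W \<Longrightarrow> merge W a c \<in> asg T (V \<union> W)"
  unfolding asg_def merge_def by auto

lemma restr_eqD: "restr W a = restr W b \<Longrightarrow> x \<in> W \<Longrightarrow> a x = b x"
  unfolding restr_def by (metis (full_types))

lemma restr_restr: "X \<subseteq> Y \<Longrightarrow> restr X (restr Y a) = restr X a"
  unfolding restr_def by (rule ext) auto

lemma restr_merge_disjoint: "X \<inter> W = {} \<Longrightarrow> restr X (merge W a c) = restr X a"
  unfolding restr_def merge_def by (rule ext) auto

lemma restr_merge_asg: "a \<in> asg T V \<Longrightarrow> V \<inter> W = {} \<Longrightarrow> restr V (merge W a c) = a"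
  unfolding restr_def merge_def using asg_undefined by fastforce

lemma merge_restr_complement: "a \<in> asg T Y \<Longrightarrow> X \<subseteq> Y \<Longrightarrow> merge X (restr (Y - X) a) (restr X a) = a"
  unfolding merge_def restr_def using asg_undefined by fastforce

lemma asg_singleton_eqI: "c \<in> asg T {u} \<Longrightarrow> d \<in> asg T {u} \<Longrightarrow> c u = d u \<Longrightarrow> c = d"
  by (rule asg_eqI) auto

lemma fun_upd_undefined_in_asg: "t \<in> T u \<Longrightarrow> (\<lambda>_. undefined)(u := t) \<in> asg T {u}"
  unfolding asg_def by simp

lemma restr_singleton: "restr {u} a = (\<lambda>_. undefined)(u := a u)"
  unfolding restr_def by (rule ext) auto

section \<open>Positive kernels\<close>

lemma mixed_outside: "mixed T V K \<Longrightarrow> a \<notin> asg T V \<or> b \<notin> asg T V \<Longrightarrow> K a b = 0"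
  unfolding mixed_def by blast

lemma mixed_quadratic_form:
  assumes "mixed T V K" and "finite F" and "F \<subseteq> asg T V"
  shows "Im (\<Sum>a\<in>F. \<Sum>b\<in>F. cnj (c a) * K a b * c b) = 0"
    and "Re (\<Sum>a\<in>F. \<Sum>b\<in>F. cnj (c a) * K a b * c b) \<ge> 0"
  using assms unfolding mixed_def by blast+

lemma mixed_diag:
  assumes "mixed T V K"
  shows "Im (K a a) = 0" and "Re (K a a) \<ge> 0"
proof -
  have "Im (K a a) = 0 \<and> Re (K a a) \<ge> 0"
  proof (cases "a \<in> asg T V")
    case True
    then show ?thesis using mixed_quadratic_form[OF assms, of "{a}" "\<lambda>_. 1"] by simp
  next
    case False
    then show ?thesis using mixed_outside[OF assms] by simp
  qed
  then show "Im (K a a) = 0" and "Re (K a a) \<ge> 0" by auto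
qed

lemma mixed_diag_of_real:
  assumes "mixed T V K"
  shows "K a a = of_real (Re (K a a))"
  using mixed_diag(1)[OF assms, of a] by (intro complex_eqI) simp_all

lemma mixed_quadratic_form_pair:
  assumes K: "mixed T V K" and a: "a \<in> asg T V" and b: "b \<in> asg T V" and "a \<noteq> b"
  shows "Re (cnj \<alpha> * K a a * \<alpha> + cnj \<alpha> * K a b * \<beta> + cnj \<beta> * K b a * \<alpha> + cnj \<beta> * K b b * \<beta>) \<ge> 0"
  using mixed_quadratic_form(2)[OF K, of "{a, b}" "\<lambda>x. if x = a then \<alpha> else \<beta>"] a b \<open>a \<noteq> b\<close>
  by (simp add: algebra_simps)

lemma mixed_hermitian:
  assumes K: "mixed T V K"
  shows "K a b = cnj (K b a)"
proof (cases "a \<in> asg T V \<and> b \<in> asg T V \<and> a \<noteq> b")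
  case False
  then consider "a = b" | "a \<notin> asg T V \<or> b \<notin> asg T V" by blast
  then show ?thesis
  proof cases
    case 1
    then show ?thesis using mixed_diag(1)[OF K, of a] by (simp add: complex_eq_iff)
  qed (metis mixed_outside[OF K] complex_cnj_zero)
next
  case True
  then have "Im (K a b + K b a) = 0"
    using mixed_quadratic_form(1)[OF K, of "{a, b}" "\<lambda>_. 1"] mixed_diag(1)[OF K] by simp
  moreover have "Re (K a b) = Re (K b a)"
    using True not_sym[of a b] mixed_diag(1)[OF K]
      mixed_quadratic_form(1)[OF K, of "{a, b}" "\<lambda>x. if x = a then 1 else \<i>"]
    by (simp add: algebra_simps)
  ultimately show ?thesis by (simp add: complex_eq_iff)
qed

lemma mixed_entry_bound:
  assumes K: "mixed T V K"
  shows "(cmod (K a b))\<^sup>2 \<le> Re (K a a) * Re (K b b)"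
proof (cases "a \<in> asg T V \<and> b \<in> asg T V \<and> a \<noteq> b")
  case False
  then consider "a = b" | "a \<notin> asg T V \<or> b \<notin> asg T V" by blast
  then show ?thesis
  proof cases
    case 1
    then show ?thesis using mixed_diag[OF K, of a] by (simp add: cmod_eq_Re power2_eq_square)
  qed (use mixed_outside[OF K] mixed_diag(2)[OF K] in auto)
next
  case True
  then have a: "a \<in> asg T V" and b: "b \<in> asg T V" and "a \<noteq> b" by auto
  define p q z where "p = Re (K a a)" and "q = Re (K b b)" and "z = K a b"
  have K_eqs: "K a a = of_real p" "K b b = of_real q" "K a b = z" "K b a = cnj z"
    using mixed_diag_of_real[OF K] mixed_hermitian[OF K, of b a] by (auto simp: p_def q_def z_def)
  have "p \<ge> 0" "q \<ge> 0" using mixed_diag(2)[OF K] by (auto simp: p_def q_def)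
  have z2: "(cmod z)\<^sup>2 = Re z * Re z + Im z * Im z" by (metis cmod_power2 power2_eq_square)
  \<comment> \<open>Evaluate the form at \<open>q e\<^sub>a - z\<^sup>* e\<^sub>b\<close>, or at \<open>- z e\<^sub>a + (p + 1) e\<^sub>b\<close> if \<open>q = 0\<close>.\<close>
  show ?thesis
  proof (cases "q = 0")
    case False
    have "0 \<le> q * (p * q - (cmod z)\<^sup>2)"
      using mixed_quadratic_form_pair[OF K a b \<open>a \<noteq> b\<close>, of "of_real q" "- cnj z"]
      by (simp add: K_eqs algebra_simps z2)
    then show ?thesis using False \<open>q \<ge> 0\<close> by (simp add: zero_le_mult_iff p_def q_def z_def)
  next
    case True
    have "0 \<le> - (p + 2) * (cmod z)\<^sup>2"
      using mixed_quadratic_form_pair[OF K a b \<open>a \<noteq> b\<close>, of "- z" "of_real (p + 1)"]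
      by (simp add: K_eqs True algebra_simps z2)
    then have "(p + 2) * (cmod z)\<^sup>2 \<le> 0" by (simp add: algebra_simps)
    then have "cmod z = 0" using \<open>p \<ge> 0\<close> by (simp add: mult_le_0_iff)
    then show ?thesis using \<open>p \<ge> 0\<close> True by (simp add: p_def q_def z_def)
  qed
qed

lemma mixed_diag_nonzero: "mixed T V K \<Longrightarrow> K a b \<noteq> 0 \<Longrightarrow> K a a \<noteq> 0"
  using mixed_entry_bound[of T V K a b] by auto

lemma mixed_diag_summable: "mixed T V K \<Longrightarrow> (\<lambda>a. Re (K a a)) summable_on UNIV"
  unfolding mixed_def
  by (auto elim!: summable_on_cong_neutral[THEN iffD1, rotated -1])

lemma mixed_zero_kernel: "mixed T V (\<lambda>_ _. 0)"
  unfolding mixed_def by simp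

lemma mixed_pullback:
  assumes K: "mixed T Y K" and S: "S \<subseteq> asg T W" and inj: "inj_on h S" and img: "h ` S \<subseteq> asg T Y"
  shows "mixed T W (\<lambda>c d. if c \<in> S \<and> d \<in> S then K (h c) (h d) else 0)"
  unfolding mixed_def
proof (intro conjI allI impI)
  fix a b :: "'a \<Rightarrow> 'b"
  assume "a \<notin> asg T W \<or> b \<notin> asg T W"
  then show "(if a \<in> S \<and> b \<in> S then K (h a) (h b) else 0) = 0" using S by auto
next
  fix F :: "('a \<Rightarrow> 'b) set" and c :: "('a \<Rightarrow> 'b) \<Rightarrow> complex"
  assume F: "finite F" "F \<subseteq> asg T W"
  define c' where "c' = c \<circ> inv_into (F \<inter> S) h"
  have injF: "inj_on h (F \<inter> S)" using inj inj_on_subset by blast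
  have "(\<Sum>a\<in>F. \<Sum>b\<in>F. cnj (c a) * (if a \<in> S \<and> b \<in> S then K (h a) (h b) else 0) * c b)
      = (\<Sum>a\<in>F \<inter> S. \<Sum>b\<in>F \<inter> S. cnj (c a) * K (h a) (h b) * c b)"
    unfolding sum.inter_restrict[OF F(1)] by (auto intro!: sum.cong)
  also have "\<dots> = (\<Sum>a\<in>F \<inter> S. \<Sum>b\<in>F \<inter> S. cnj (c' (h a)) * K (h a) (h b) * c' (h b))"
    using injF by (intro sum.cong refl) (auto simp: c'_def)
  also have "\<dots> = (\<Sum>x\<in>h ` (F \<inter> S). \<Sum>y\<in>h ` (F \<inter> S). cnj (c' x) * K x y * c' y)"
    by (simp add: sum.reindex[OF injF])
  finally have eq: "(\<Sum>a\<in>F. \<Sum>b\<in>F. cnj (c a) * (if a \<in> S \<and> b \<in> S then K (h a) (h b) else 0) * c b)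
      = (\<Sum>x\<in>h ` (F \<inter> S). \<Sum>y\<in>h ` (F \<inter> S). cnj (c' x) * K x y * c' y)" .
  have "h ` (F \<inter> S) \<subseteq> asg T Y" using img by blast
  from mixed_quadratic_form[OF K _ this, of c'] F(1)
  show "Im (\<Sum>a\<in>F. \<Sum>b\<in>F. cnj (c a) * (if a \<in> S \<and> b \<in> S then K (h a) (h b) else 0) * c b) = 0"
    and "0 \<le> Re (\<Sum>a\<in>F. \<Sum>b\<in>F. cnj (c a) * (if a \<in> S \<and> b \<in> S then K (h a) (h b) else 0) * c b)"
    unfolding eq by auto
next
  have "(\<lambda>x. Re (K x x)) summable_on h ` S"
    using mixed_diag_summable[OF K] by (rule summable_on_subset_banach) simp
  then have "(\<lambda>a. Re (K (h a) (h a))) summable_on S"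
    using summable_on_reindex[OF inj, of "\<lambda>x. Re (K x x)"] by (simp add: comp_def)
  then show "(\<lambda>a. Re (if a \<in> S \<and> a \<in> S then K (h a) (h a) else 0)) summable_on asg T W"
    by (rule summable_on_cong_neutral[THEN iffD1, rotated -1]) (use S in auto)
qed

lemma mixed_basis_projection:
  assumes e: "e \<in> asg T W"
  shows "mixed T W (\<lambda>v w. if v = e \<and> w = e then 1 else 0)"
  unfolding mixed_def
proof (intro conjI allI impI)
  fix a b
  assume "a \<notin> asg T W \<or> b \<notin> asg T W"
  then show "(if a = e \<and> b = e then 1 else 0) = (0::complex)" using e by auto
next
  fix F :: "('a \<Rightarrow> 'b) set" and c :: "('a \<Rightarrow> 'b) \<Rightarrow> complex"
  assume "finite F"
  have "(\<Sum>a\<in>F. \<Sum>b\<in>F. cnj (c a) * (if a = e \<and> b = e then 1 else 0) * c b)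
      = (\<Sum>a\<in>F. if a = e then (\<Sum>b\<in>F. if b = e then cnj (c e) * c e else 0) else 0)"
    by (intro sum.cong refl) (auto intro!: sum.cong)
  also have "\<dots> = (if e \<in> F then of_real ((cmod (c e))\<^sup>2) else 0)"
    using \<open>finite F\<close> complex_norm_square[of "c e"] by (simp add: mult.commute)
  finally have "(\<Sum>a\<in>F. \<Sum>b\<in>F. cnj (c a) * (if a = e \<and> b = e then 1 else 0) * c b)
      = (if e \<in> F then of_real ((cmod (c e))\<^sup>2) else 0)" .
  then show "Im (\<Sum>a\<in>F. \<Sum>b\<in>F. cnj (c a) * (if a = e \<and> b = e then 1 else 0) * c b) = 0"
    and "0 \<le> Re (\<Sum>a\<in>F. \<Sum>b\<in>F. cnj (c a) * (if a = e \<and> b = e then 1 else 0) * c b)"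
    by auto
next
  show "(\<lambda>a. Re (if a = e \<and> a = e then 1 else 0)) summable_on asg T W"
    by (rule finite_nonzero_values_imp_summable_on) (simp add: Collect_conv_if)
qed

section \<open>Square-summable functions and supports\<close>

lemma ell2_summable: "\<psi> \<in> ell2 T V \<Longrightarrow> (\<lambda>a. (cmod (\<psi> a))\<^sup>2) summable_on UNIV"
  unfolding ell2_def by blast

lemma ell2_outside: "\<psi> \<in> ell2 T V \<Longrightarrow> a \<notin> asg T V \<Longrightarrow> \<psi> a = 0"
  unfolding ell2_def by blast

lemma l2norm_nonneg: "l2norm \<psi> \<ge> 0"
  unfolding l2norm_def by (simp add: infsum_nonneg)

lemma cmod_le_l2norm:
  assumes "(\<lambda>m. (cmod (g m))\<^sup>2) summable_on UNIV"
  shows "cmod (g a) \<le> l2norm g"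
proof -
  have "(\<Sum>m\<in>{a}. (cmod (g m))\<^sup>2) \<le> (\<Sum>\<^sub>\<infinity>m. (cmod (g m))\<^sup>2)"
    by (rule finite_sum_le_infsum[OF assms]) auto
  then have "sqrt ((cmod (g a))\<^sup>2) \<le> l2norm g"
    unfolding l2norm_def by (simp del: real_sqrt_abs)
  then show ?thesis by simp
qed

lemma ell2_diff_summable:
  assumes "f \<in> ell2 T V" and "\<psi> \<in> ell2 T V"
  shows "(\<lambda>m. (cmod (f m - \<psi> m))\<^sup>2) summable_on UNIV"
proof (rule summable_on_comparison_test)
  show "(\<lambda>m. 2 * (cmod (f m))\<^sup>2 + 2 * (cmod (\<psi> m))\<^sup>2) summable_on UNIV"
    using assms by (intro summable_on_add summable_on_cmult_right ell2_summable)
  show "(cmod (f m - \<psi> m))\<^sup>2 \<le> 2 * (cmod (f m))\<^sup>2 + 2 * (cmod (\<psi> m))\<^sup>2" for m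
  proof -
    have "(cmod (f m - \<psi> m))\<^sup>2 \<le> (cmod (f m) + cmod (\<psi> m))\<^sup>2"
      by (simp add: power_mono norm_triangle_ineq4)
    also have "\<dots> \<le> 2 * (cmod (f m))\<^sup>2 + 2 * (cmod (\<psi> m))\<^sup>2"
      using zero_le_power2[of "cmod (f m) - cmod (\<psi> m)"] by (simp add: power2_sum power2_diff)
    finally show ?thesis .
  qed
qed simp

lemma ell2_tendsto_pointwise:
  assumes "\<And>n. f n \<in> ell2 T V" and "\<psi> \<in> ell2 T V"
    and "(\<lambda>n. l2norm (\<lambda>a. f n a - \<psi> a)) \<longlonglongrightarrow> 0"
  shows "(\<lambda>n. f n a) \<longlonglongrightarrow> \<psi> a"
proof (rule LIM_zero_cancel, rule Lim_null_comparison[OF _ assms(3)])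
  show "\<forall>\<^sub>F n in sequentially. norm (f n a - \<psi> a) \<le> l2norm (\<lambda>a. f n a - \<psi> a)"
    using cmod_le_l2norm[OF ell2_diff_summable[OF assms(1,2)]] by simp
qed

lemma ell2_add: "f \<in> ell2 T V \<Longrightarrow> g \<in> ell2 T V \<Longrightarrow> (\<lambda>a. f a + g a) \<in> ell2 T V"
  using ell2_diff_summable[of f T V "\<lambda>a. - g a"] unfolding ell2_def by auto

lemma ell2_scale:
  assumes "f \<in> ell2 T V"
  shows "(\<lambda>a. c * f a) \<in> ell2 T V"
proof -
  have "(\<lambda>m. (cmod c)\<^sup>2 * (cmod (f m))\<^sup>2) summable_on UNIV"
    using ell2_summable[OF assms] by (rule summable_on_cmult_right)
  then show ?thesis using assms unfolding ell2_def by (auto simp: norm_mult power_mult_distrib)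
qed

lemma ell2_delta: "y \<in> asg T V \<Longrightarrow> (\<lambda>b. if b = y then 1 else 0) \<in> ell2 T V"
  unfolding ell2_def
  by (auto intro: finite_nonzero_values_imp_summable_on simp: Collect_conv_if)

lemma ell2_pullback:
  assumes \<psi>: "\<psi> \<in> ell2 T W" and P: "P \<subseteq> asg T V" and inj: "inj_on h P"
  shows "(\<lambda>a. if a \<in> P then \<psi> (h a) else 0) \<in> ell2 T V"
proof -
  have "(\<lambda>m. (cmod (\<psi> m))\<^sup>2) summable_on h ` P"
    using ell2_summable[OF \<psi>] by (rule summable_on_subset_banach) simp
  then have "(\<lambda>a. (cmod (\<psi> (h a)))\<^sup>2) summable_on P"
    using summable_on_reindex[OF inj, of "\<lambda>m. (cmod (\<psi> m))\<^sup>2"] by (simp add: comp_def)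
  then have "(\<lambda>a. (cmod (if a \<in> P then \<psi> (h a) else 0))\<^sup>2) summable_on UNIV"
    by (rule summable_on_cong_neutral[THEN iffD1, rotated -1]) simp_all
  then show ?thesis using P unfolding ell2_def by auto
qed

lemma ell2_truncation_tendsto:
  assumes \<psi>: "\<psi> \<in> ell2 T V"
  obtains G where "\<And>n. finite (G n)"
    and "(\<lambda>n. l2norm (\<lambda>a. (if a \<in> G n then \<psi> a else 0) - \<psi> a)) \<longlonglongrightarrow> 0"
proof -
  define h where "h b = (cmod (\<psi> b))\<^sup>2" for b
  have hs: "h summable_on UNIV" unfolding h_def by (rule ell2_summable[OF \<psi>])
  have "\<exists>G. finite G \<and> G \<subseteq> UNIV \<and> dist (sum h G) (infsum h UNIV) \<le> 1 / (real n + 1)" for n :: nat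
    by (rule infsum_finite_approximation[OF hs]) simp
  then obtain G where G: "\<And>n. finite (G n)"
    "\<And>n. dist (sum h (G n)) (infsum h UNIV) \<le> 1 / (real n + 1)"
    by metis
  have bound: "l2norm (\<lambda>a. (if a \<in> G n then \<psi> a else 0) - \<psi> a) \<le> sqrt (1 / (real n + 1))" for n
  proof -
    have "(\<Sum>\<^sub>\<infinity>a. (cmod ((if a \<in> G n then \<psi> a else 0) - \<psi> a))\<^sup>2) = infsum h (UNIV - G n)"
      by (rule infsum_cong_neutral) (auto simp: h_def)
    also have "\<dots> = infsum h UNIV - sum h (G n)"
      using infsum_Diff[OF hs summable_on_finite[OF G(1)], of n] G(1) by simp
    also have "\<dots> \<le> 1 / (real n + 1)" using G(2)[of n] by (simp add: dist_real_def)
    finally show ?thesis unfolding l2norm_def by (rule real_sqrt_le_mono)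
  qed
  have "(\<lambda>n. l2norm (\<lambda>a. (if a \<in> G n then \<psi> a else 0) - \<psi> a)) \<longlonglongrightarrow> 0"
  proof (rule Lim_null_comparison)
    show "\<forall>\<^sub>F n in sequentially. norm (l2norm (\<lambda>a. (if a \<in> G n then \<psi> a else 0) - \<psi> a))
        \<le> sqrt (1 / (real n + 1))"
      using bound by (simp add: l2norm_nonneg)
    show "(\<lambda>n. sqrt (1 / (real n + 1))) \<longlonglongrightarrow> 0"
      using tendsto_real_sqrt[OF LIMSEQ_inverse_real_of_nat]
      by (simp add: inverse_eq_divide add.commute)
  qed
  with G(1) show ?thesis by (rule that)
qed

lemma kapply_delta: "kapply K (\<lambda>b. if b = y then 1 else 0) = (\<lambda>a. K a y)"
proof
  fix a
  have "(\<Sum>\<^sub>\<infinity>b. K a b * (if b = y then 1 else 0)) = (\<Sum>\<^sub>\<infinity>b\<in>{y}. K a b * (if b = y then 1 else 0))"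
    by (rule infsum_cong_neutral) auto
  then show "kapply K (\<lambda>b. if b = y then 1 else 0) a = K a y" unfolding kapply_def by simp
qed

lemma mixed_weighted_summable:
  assumes K: "mixed T V K" and \<psi>: "\<psi> \<in> ell2 T V"
  shows "(\<lambda>b. sqrt (Re (K b b)) * cmod (\<psi> b)) summable_on UNIV"
proof (rule summable_on_comparison_test)
  show "(\<lambda>b. (Re (K b b) + (cmod (\<psi> b))\<^sup>2) / 2) summable_on UNIV"
    using summable_on_cmult_left[of _ UNIV "1 / 2",
        OF summable_on_add[OF mixed_diag_summable[OF K] ell2_summable[OF \<psi>]]]
    by simp
  show "sqrt (Re (K b b)) * cmod (\<psi> b) \<le> (Re (K b b) + (cmod (\<psi> b))\<^sup>2) / 2" for b
    using zero_le_power2[of "sqrt (Re (K b b)) - cmod (\<psi> b)"] mixed_diag(2)[OF K, of b]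
    by (simp add: power2_diff)
qed (simp add: mixed_diag(2)[OF K])

lemma kapply_bound:
  assumes K: "mixed T V K" and \<psi>: "\<psi> \<in> ell2 T V"
  shows "cmod (kapply K \<psi> a) \<le> sqrt (Re (K a a)) * (\<Sum>\<^sub>\<infinity>b. sqrt (Re (K b b)) * cmod (\<psi> b))"
proof -
  define s where "s b = sqrt (Re (K b b)) * cmod (\<psi> b)" for b
  have s: "s summable_on UNIV" unfolding s_def by (rule mixed_weighted_summable[OF K \<psi>])
  have entry: "cmod (K a b * \<psi> b) \<le> sqrt (Re (K a a)) * s b" for b
  proof -
    have "cmod (K a b) \<le> sqrt (Re (K a a) * Re (K b b))"
      using real_sqrt_le_mono[OF mixed_entry_bound[OF K, of a b]] by simp
    then have "cmod (K a b) * cmod (\<psi> b) \<le> sqrt (Re (K a a) * Re (K b b)) * cmod (\<psi> b)"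
      by (rule mult_right_mono) simp
    then show ?thesis by (simp add: s_def norm_mult real_sqrt_mult mult.assoc)
  qed
  have g: "(\<lambda>b. sqrt (Re (K a a)) * s b) summable_on UNIV"
    using s by (rule summable_on_cmult_right)
  have abs: "(\<lambda>b. norm (K a b * \<psi> b)) summable_on UNIV"
    by (rule summable_on_comparison_test[OF g]) (simp_all add: entry)
  have "cmod (kapply K \<psi> a) \<le> (\<Sum>\<^sub>\<infinity>b. cmod (K a b * \<psi> b))"
    unfolding kapply_def by (rule norm_infsum_bound[OF abs])
  also have "\<dots> \<le> (\<Sum>\<^sub>\<infinity>b. sqrt (Re (K a a)) * s b)"
    by (rule infsum_mono[OF abs g entry])
  also have "\<dots> = sqrt (Re (K a a)) * (\<Sum>\<^sub>\<infinity>b. s b)"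
    by (rule infsum_cmult_right')
  finally show ?thesis by (simp add: s_def)
qed

lemma kapply_ell2:
  assumes K: "mixed T V K" and \<psi>: "\<psi> \<in> ell2 T V"
  shows "kapply K \<psi> \<in> ell2 T V"
proof -
  define S where "S = (\<Sum>\<^sub>\<infinity>b. sqrt (Re (K b b)) * cmod (\<psi> b))"
  have "(\<lambda>a. (cmod (kapply K \<psi> a))\<^sup>2) summable_on UNIV"
  proof (rule summable_on_comparison_test)
    show "(\<lambda>a. Re (K a a) * S\<^sup>2) summable_on UNIV"
      by (rule summable_on_cmult_left[OF mixed_diag_summable[OF K]])
    show "(cmod (kapply K \<psi> a))\<^sup>2 \<le> Re (K a a) * S\<^sup>2" for a
      using power_mono[OF kapply_bound[OF K \<psi>, of a], of 2] mixed_diag(2)[OF K, of a]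
      by (simp add: S_def power_mult_distrib)
  qed simp
  moreover have "kapply K \<psi> a = 0" if "a \<notin> asg T V" for a
    unfolding kapply_def using mixed_outside[OF K] that by simp
  ultimately show ?thesis unfolding ell2_def by blast
qed

lemma closed_subspaceD:
  assumes "closed_subspace T V A"
  shows "A \<subseteq> ell2 T V"
    and "(\<lambda>_. 0) \<in> A"
    and "\<phi> \<in> A \<Longrightarrow> \<psi> \<in> A \<Longrightarrow> (\<lambda>a. \<phi> a + \<psi> a) \<in> A"
    and "\<psi> \<in> A \<Longrightarrow> (\<lambda>a. c * \<psi> a) \<in> A"
    and "(\<And>n. f n \<in> A) \<Longrightarrow> \<psi> \<in> ell2 T V \<Longrightarrow> (\<lambda>n. l2norm (\<lambda>a. f n a - \<psi> a)) \<longlonglongrightarrow> 0 \<Longrightarrow> \<psi> \<in> A"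
  using assms unfolding closed_subspace_def by blast+

definition ell2_on ::
    "('v \<Rightarrow> 'val set) \<Rightarrow> 'v set \<Rightarrow> ('v \<Rightarrow> 'val) set \<Rightarrow> (('v \<Rightarrow> 'val) \<Rightarrow> complex) set" where
  "ell2_on T V S = {\<psi> \<in> ell2 T V. \<forall>a. a \<notin> S \<longrightarrow> \<psi> a = 0}"

lemma closed_subspace_ell2_on: "closed_subspace T V (ell2_on T V S)"
  unfolding closed_subspace_def
proof (intro conjI allI ballI impI)
  show "ell2_on T V S \<subseteq> ell2 T V" by (auto simp: ell2_on_def)
  show "(\<lambda>_. 0) \<in> ell2_on T V S" by (simp add: ell2_on_def ell2_def)
  show "(\<lambda>a. \<phi> a + \<psi> a) \<in> ell2_on T V S" if "\<phi> \<in> ell2_on T V S" "\<psi> \<in> ell2_on T V S" for \<phi> \<psi>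
    using that ell2_add by (auto simp: ell2_on_def)
  show "(\<lambda>a. c * \<psi> a) \<in> ell2_on T V S" if "\<psi> \<in> ell2_on T V S" for c \<psi>
    using that ell2_scale by (auto simp: ell2_on_def)
next
  fix f \<psi>
  assume f: "\<forall>n::nat. f n \<in> ell2_on T V S" and \<psi>: "\<psi> \<in> ell2 T V"
    and lim: "(\<lambda>n. l2norm (\<lambda>a. f n a - \<psi> a)) \<longlonglongrightarrow> 0"
  have "\<psi> a = 0" if "a \<notin> S" for a
  proof -
    have "(\<lambda>n. f n a) \<longlonglongrightarrow> \<psi> a"
      using f by (intro ell2_tendsto_pointwise[OF _ \<psi> lim]) (simp add: ell2_on_def)
    moreover have "(\<lambda>n. f n a) = (\<lambda>n. 0)" using f that by (simp add: ell2_on_def)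
    ultimately show ?thesis using LIMSEQ_unique by auto
  qed
  with \<psi> show "\<psi> \<in> ell2_on T V S" by (simp add: ell2_on_def)
qed

lemma ell2_on_subset_closed_subspace:
  assumes A: "closed_subspace T V A"
    and delta: "\<And>a. a \<in> S \<Longrightarrow> a \<in> asg T V \<Longrightarrow> (\<lambda>b. if b = a then 1 else 0) \<in> A"
  shows "ell2_on T V S \<subseteq> A"
proof
  fix \<psi>
  assume "\<psi> \<in> ell2_on T V S"
  then have \<psi>: "\<psi> \<in> ell2 T V" and S: "\<And>a. \<psi> a \<noteq> 0 \<Longrightarrow> a \<in> S" by (auto simp: ell2_on_def)
  have truncation: "(\<lambda>b. if b \<in> G then \<psi> b else 0) \<in> A" if "finite G" for G
    using that
  proof (induction G rule: finite_induct)
    case empty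
    then show ?case using closed_subspaceD(2)[OF A] by simp
  next
    case (insert a G)
    have "(\<lambda>b. (if b \<in> G then \<psi> b else 0) + \<psi> a * (if b = a then 1 else 0)) \<in> A"
    proof (cases "\<psi> a = 0")
      case True
      then show ?thesis using insert.IH by simp
    next
      case False
      then have "a \<in> S" and "a \<in> asg T V" using S ell2_outside[OF \<psi>] by auto
      then have "(\<lambda>b. \<psi> a * (if b = a then 1 else 0)) \<in> A"
        by (intro closed_subspaceD(4)[OF A] delta)
      then show ?thesis by (rule closed_subspaceD(3)[OF A insert.IH])
    qed
    moreover have "(\<lambda>b. (if b \<in> G then \<psi> b else 0) + \<psi> a * (if b = a then 1 else 0))
        = (\<lambda>b. if b \<in> insert a G then \<psi> b else 0)"
      using insert.hyps(2) by auto
    ultimately show ?case by simp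
  qed
  obtain G where G: "\<And>n. finite (G n)"
    and lim: "(\<lambda>n. l2norm (\<lambda>a. (if a \<in> G n then \<psi> a else 0) - \<psi> a)) \<longlonglongrightarrow> 0"
    using ell2_truncation_tendsto[OF \<psi>] by blast
  show "\<psi> \<in> A" by (rule closed_subspaceD(5)[OF A truncation[OF G] \<psi> lim])
qed

lemma kapply_image_subset_supp: "mixed T V K \<Longrightarrow> kapply K ` ell2 T V \<subseteq> supp T V K"
  unfolding supp_def l2closure_def by (auto simp: kapply_ell2 l2norm_def)

lemma supp_subset_closed_subspace_iff:
  assumes K: "mixed T V K" and A: "closed_subspace T V A"
  shows "supp T V K \<subseteq> A \<longleftrightarrow> kapply K ` ell2 T V \<subseteq> A"
proof
  assume "supp T V K \<subseteq> A"
  with kapply_image_subset_supp[OF K] show "kapply K ` ell2 T V \<subseteq> A" by (rule order_trans)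
next
  assume range: "kapply K ` ell2 T V \<subseteq> A"
  show "supp T V K \<subseteq> A"
  proof
    fix \<phi>
    assume "\<phi> \<in> supp T V K"
    then obtain f where \<phi>: "\<phi> \<in> ell2 T V" and f: "\<And>n::nat. f n \<in> kapply K ` ell2 T V"
      and lim: "(\<lambda>n. l2norm (\<lambda>a. f n a - \<phi> a)) \<longlonglongrightarrow> 0"
      unfolding supp_def l2closure_def by (auto simp only: mem_Collect_eq)
    show "\<phi> \<in> A" using f range by (intro closed_subspaceD(5)[OF A _ \<phi> lim]) blast
  qed
qed

lemma supp_subset_ell2_on_iff:
  assumes K: "mixed T V K"
  shows "supp T V K \<subseteq> ell2_on T V S \<longleftrightarrow> (\<forall>a b. a \<notin> S \<longrightarrow> K a b = 0)"
  unfolding supp_subset_closed_subspace_iff[OF K closed_subspace_ell2_on]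
proof (intro iffI allI impI)
  fix a b
  assume range: "kapply K ` ell2 T V \<subseteq> ell2_on T V S" and "a \<notin> S"
  show "K a b = 0"
  proof (cases "b \<in> asg T V")
    case True
    then have "kapply K (\<lambda>b'. if b' = b then 1 else 0) \<in> ell2_on T V S"
      using range ell2_delta by blast
    then have "(\<lambda>a. K a b) \<in> ell2_on T V S" by (simp only: kapply_delta)
    with \<open>a \<notin> S\<close> show ?thesis by (simp add: ell2_on_def)
  qed (simp add: mixed_outside[OF K])
next
  assume zero: "\<forall>a b. a \<notin> S \<longrightarrow> K a b = 0"
  show "kapply K ` ell2 T V \<subseteq> ell2_on T V S"
  proof (rule image_subsetI)
    fix \<psi>
    assume "\<psi> \<in> ell2 T V"
    moreover have "kapply K \<psi> a = 0" if "a \<notin> S" for a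
      unfolding kapply_def using zero that by simp
    ultimately show "kapply K \<psi> \<in> ell2_on T V S" by (simp add: ell2_on_def kapply_ell2[OF K])
  qed
qed

section \<open>Classical equality and classical kernels\<close>

lemma has_sum_if_eq_both:
  assumes "c \<noteq> 0 \<Longrightarrow> j = k \<and> j \<in> I"
  shows "((\<lambda>i. if j = i \<and> k = i then c else 0) has_sum c) I"
proof (cases "c = 0")
  case True
  then show ?thesis by (simp add: has_sum_0)
next
  case False
  with assms show ?thesis by (intro has_sum_finite_neutralI[of "{j}"]) auto
qed

lemma separable_countable_sum:
  assumes I: "countable I"
    and R: "\<And>i. i \<in> I \<Longrightarrow> mixed T V (R i)" and L: "\<And>i. i \<in> I \<Longrightarrow> mixed T W (L i)"
    and K: "\<And>a b. ((\<lambda>i. tensor T V W (R i) (L i) a b) has_sum K a b) I"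
  shows "separable T V W K"
proof -
  define N where "N = to_nat_on I ` I"
  define R' where "R' n = (if n \<in> N then R (from_nat_into I n) else (\<lambda>_ _. 0))" for n
  define L' where "L' n = (if n \<in> N then L (from_nat_into I n) else (\<lambda>_ _. 0))" for n
  have from_nat: "from_nat_into I n \<in> I" if "n \<in> N" for n
    using that from_nat_into_to_nat_on[OF I] by (auto simp: N_def)
  show ?thesis
    unfolding separable_def
  proof (intro exI conjI allI)
    show "mixed T V (R' n)" and "mixed T W (L' n)" for n
      using R L from_nat by (simp_all add: R'_def L'_def mixed_zero_kernel)
    fix a b
    have "((\<lambda>n. tensor T V W (R' n) (L' n) a b) \<circ> to_nat_on I has_sum K a b) I"
      using K by (rule has_sum_cong[THEN iffD1, rotated])
        (simp add: R'_def L'_def N_def from_nat_into_to_nat_on[OF I])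
    then have "((\<lambda>n. tensor T V W (R' n) (L' n) a b) has_sum K a b) N"
      unfolding N_def by (subst has_sum_reindex[OF inj_on_to_nat_on[OF I]])
    then show "((\<lambda>n. tensor T V W (R' n) (L' n) a b) has_sum K a b) UNIV"
      by (rule has_sum_cong_neutral[THEN iffD1, rotated -1])
        (auto simp: R'_def L'_def tensor_def)
  qed
qed

lemma asg_eq_by_parts:
  assumes "a \<in> asg T V" and "b \<in> asg T V" and "restr X a = restr X b" and "a u = b u"
    and "restr (V - X - {u}) a = restr (V - X - {u}) b"
  shows "a = b"
  using assms(1,2)
proof (rule asg_eqI)
  fix x
  assume "x \<in> V"
  then consider "x \<in> X" | "x = u" | "x \<in> V - X - {u}" by blast
  then show "a x = b x" using assms(3-5) by cases (auto dest: restr_eqD)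
qed

definition cl_graph :: "('v \<Rightarrow> 'val set) \<Rightarrow> 'v set \<Rightarrow> 'v set \<Rightarrow> 'v \<Rightarrow> (('v \<Rightarrow> 'val) \<Rightarrow> 'val) \<Rightarrow>
    ('v \<Rightarrow> 'val) set" where
  "cl_graph T V X u enc = {a \<in> asg T V. a u = enc (restr X a)}"

lemma cl_eq_eq_ell2_on:
  fixes T :: "'v \<Rightarrow> 'val set"
  assumes XV: "X \<subseteq> V"
  shows "cl_eq T V X u enc = ell2_on T V (cl_graph T V X u enc)"
proof -
  define W where "W = V - X - {u}"
  define gen where "gen i (\<psi> :: ('v \<Rightarrow> 'val) \<Rightarrow> complex) =
      (\<lambda>a. if a \<in> asg T V \<and> restr X a = i \<and> a u = enc i then \<psi> (restr W a) else 0)" for i \<psi>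
  have cl_eq: "cl_eq T V X u enc = closed_span T V {gen i \<psi> | i \<psi>. i \<in> asg T X \<and> \<psi> \<in> ell2 T W}"
    unfolding cl_eq_def gen_def W_def by (rule arg_cong[where f="closed_span T V"]) blast
  have gen_in: "gen i \<psi> \<in> ell2_on T V (cl_graph T V X u enc)" if "\<psi> \<in> ell2 T W" for i \<psi>
  proof -
    let ?P = "{a \<in> asg T V. restr X a = i \<and> a u = enc i}"
    have "inj_on (restr W) ?P"
      by (rule inj_onI, rule asg_eq_by_parts[where X = X and u = u]) (auto simp: W_def)
    then have "(\<lambda>a. if a \<in> ?P then \<psi> (restr W a) else 0) \<in> ell2 T V"
      by (intro ell2_pullback[OF that]) auto
    then show ?thesis by (auto simp: gen_def ell2_on_def cl_graph_def)
  qed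
  have delta_gen:
    "(\<lambda>b. if b = a then 1 else 0) = gen (restr X a) (\<lambda>w. if w = restr W a then 1 else 0)"
    if "a \<in> cl_graph T V X u enc" for a
  proof
    fix b
    have "b = a \<longleftrightarrow>
        b \<in> asg T V \<and> restr X b = restr X a \<and> b u = enc (restr X a) \<and> restr W b = restr W a"
      using that asg_eq_by_parts[of b T V a X u] by (auto simp: cl_graph_def W_def)
    then show "(if b = a then 1 else 0) = gen (restr X a) (\<lambda>w. if w = restr W a then 1 else 0) b"
      by (simp add: gen_def)
  qed
  show ?thesis
  proof
    show "cl_eq T V X u enc \<subseteq> ell2_on T V (cl_graph T V X u enc)"
      unfolding cl_eq closed_span_def using closed_subspace_ell2_on gen_in by blast
    show "ell2_on T V (cl_graph T V X u enc) \<subseteq> cl_eq T V X u enc"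
      unfolding cl_eq closed_span_def
    proof (intro Inter_greatest, elim CollectE conjE)
      fix A
      assume A: "closed_subspace T V A" and gens: "{gen i \<psi> | i \<psi>. i \<in> asg T X \<and> \<psi> \<in> ell2 T W} \<subseteq> A"
      show "ell2_on T V (cl_graph T V X u enc) \<subseteq> A"
      proof (rule ell2_on_subset_closed_subspace[OF A])
        fix a
        assume a: "a \<in> cl_graph T V X u enc"
        then have "restr X a \<in> asg T X" and "(\<lambda>w. if w = restr W a then 1 else 0) \<in> ell2 T W"
          using XV by (auto intro: restr_in_asg ell2_delta simp: cl_graph_def W_def)
        then show "(\<lambda>b. if b = a then 1 else 0) \<in> A" using gens delta_gen[OF a] by blast
      qed
    qed
  qed
qed

definition block_diagonal :: "'v set \<Rightarrow> (('v \<Rightarrow> 'val) \<Rightarrow> ('v \<Rightarrow> 'val) \<Rightarrow> complex) \<Rightarrow> bool" where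
  "block_diagonal X \<rho> \<longleftrightarrow> (\<forall>a b. restr X a \<noteq> restr X b \<longrightarrow> \<rho> a b = 0)"

lemma classical_in_iff_block_diagonal:
  fixes T :: "'v \<Rightarrow> 'val set"
  assumes \<rho>: "mixed T Y \<rho>" and XY: "X \<subseteq> Y"
  shows "classical_in T Y X \<rho> \<longleftrightarrow> block_diagonal X \<rho>"
  unfolding block_diagonal_def
proof (intro iffI allI impI)
  fix a b :: "'v \<Rightarrow> 'val"
  assume "classical_in T Y X \<rho>" and ne: "restr X a \<noteq> restr X b"
  then obtain R where R:
    "((\<lambda>i. tensor T X (Y - X) (\<lambda>a' b'. if a' = i \<and> b' = i then 1 else 0) (R i) a b)
      has_sum \<rho> a b) (asg T X)"
    unfolding classical_in_def by blast
  moreover have "((\<lambda>i. tensor T X (Y - X) (\<lambda>a' b'. if a' = i \<and> b' = i then 1 else 0) (R i) a b)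
      has_sum 0) (asg T X)"
    using ne by (intro has_sum_0) (auto simp: tensor_def)
  ultimately show "\<rho> a b = 0" using has_sum_unique by blast
next
  assume block: "\<forall>a b. restr X a \<noteq> restr X b \<longrightarrow> \<rho> a b = 0"
  define R where "R i = (\<lambda>c d. if c \<in> asg T (Y - X) \<and> d \<in> asg T (Y - X)
      then \<rho> (merge X c i) (merge X d i) else 0)" for i
  have XYX: "X \<union> (Y - X) = Y" "X \<union> Y = Y" using XY by blast+
  have R_mixed: "mixed T (Y - X) (R i)" if i: "i \<in> asg T X" for i
    unfolding R_def
  proof (rule mixed_pullback[OF \<rho> subset_refl])
    show "inj_on (\<lambda>c. merge X c i) (asg T (Y - X))"
    proof (rule inj_onI)
      fix c d
      assume cd: "c \<in> asg T (Y - X)" "d \<in> asg T (Y - X)" and eq: "merge X c i = merge X d i"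
      from cd show "c = d"
        by (rule asg_eqI) (metis DiffD2 eq merge_def)
    qed
    show "(\<lambda>c. merge X c i) ` asg T (Y - X) \<subseteq> asg T Y"
      using merge_in_asg[OF _ i] XYX by (metis Un_commute image_subsetI)
  qed
  have tensor_R: "tensor T X (Y - X) (\<lambda>a' b'. if a' = i \<and> b' = i then 1 else 0) (R i) a b
      = (if restr X a = i \<and> restr X b = i then \<rho> a b else 0)" for i a b
  proof (cases "a \<in> asg T Y \<and> b \<in> asg T Y")
    case True
    then show ?thesis
      using merge_restr_complement[of a T Y X] merge_restr_complement[of b T Y X] XY
      by (auto simp: tensor_def R_def XYX restr_in_asg)
  next
    case False
    then show ?thesis using mixed_outside[OF \<rho>] by (auto simp: tensor_def XYX)
  qed
  have sum: "((\<lambda>i. if restr X a = i \<and> restr X b = i then \<rho> a b else 0) has_sum \<rho> a b) (asg T X)"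
    for a b
    using block mixed_outside[OF \<rho>, of a b] XY
    by (intro has_sum_if_eq_both) (auto intro: restr_in_asg)
  show "classical_in T Y X \<rho>"
    unfolding classical_in_def
  proof (intro exI[of _ R] conjI ballI allI R_mixed)
    show "((\<lambda>i. tensor T X (Y - X) (\<lambda>a' b'. if a' = i \<and> b' = i then 1 else 0) (R i) a b)
        has_sum \<rho> a b) (asg T X)" for a b
      using sum[of a b] by (simp only: tensor_R)
  qed
qed

lemma merge_in_cl_graph_iff:
  assumes a: "a \<in> asg T Y" and c: "c \<in> asg T {u}" and XY: "X \<subseteq> Y" and uY: "u \<notin> Y"
  shows "merge {u} a c \<in> cl_graph T (Y \<union> {u}) X u enc \<longleftrightarrow> c u = enc (restr X a)"
proof -
  have "restr X (merge {u} a c) = restr X a" using XY uY by (intro restr_merge_disjoint) auto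
  then show ?thesis using merge_in_asg[OF a c] by (simp add: cl_graph_def merge_def)
qed

lemma restr_inj_on_cl_graph:
  assumes XY: "X \<subseteq> Y" and uY: "u \<notin> Y"
  shows "inj_on (restr Y) (cl_graph T (Y \<union> {u}) X u enc)"
proof (rule inj_onI)
  fix x y
  assume x: "x \<in> cl_graph T (Y \<union> {u}) X u enc" and y: "y \<in> cl_graph T (Y \<union> {u}) X u enc"
    and eq: "restr Y x = restr Y y"
  have "restr X x = restr X y" using restr_restr[OF XY] eq by metis
  then have "x u = y u" using x y by (simp add: cl_graph_def)
  with x y eq show "x = y"
    by (intro asg_eqI[of x T "Y \<union> {u}"]) (auto simp: cl_graph_def dest: restr_eqD)
qed

lemma ptrace_vanishes_across_blocks:
  assumes K: "\<And>x y. x \<notin> cl_graph T (Y \<union> {u}) X u enc \<or> y \<notin> cl_graph T (Y \<union> {u}) X u enc \<Longrightarrow> K x y = 0"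
    and XY: "X \<subseteq> Y" and uY: "u \<notin> Y" and enc: "inj_on enc (asg T X)"
    and ne: "restr X a \<noteq> restr X b"
  shows "ptrace T Y {u} K a b = 0"
proof (cases "a \<in> asg T Y \<and> b \<in> asg T Y")
  case True
  have "K (merge {u} a c) (merge {u} b c) = 0" if c: "c \<in> asg T {u}" for c
  proof (rule K)
    have "enc (restr X a) \<noteq> enc (restr X b)"
      using True XY ne inj_onD[OF enc] restr_in_asg by metis
    then show "merge {u} a c \<notin> cl_graph T (Y \<union> {u}) X u enc \<or>
        merge {u} b c \<notin> cl_graph T (Y \<union> {u}) X u enc"
      using True merge_in_cl_graph_iff[OF _ c XY uY] by auto
  qed
  then show ?thesis by (simp add: ptrace_def infsum_0)
qed (auto simp: ptrace_def)

section \<open>Copying a classical variable into a ghost\<close>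

definition ghost_copy :: "('v \<Rightarrow> 'val set) \<Rightarrow> 'v set \<Rightarrow> 'v set \<Rightarrow> 'v \<Rightarrow> (('v \<Rightarrow> 'val) \<Rightarrow> 'val) \<Rightarrow>
    (('v \<Rightarrow> 'val) \<Rightarrow> ('v \<Rightarrow> 'val) \<Rightarrow> complex) \<Rightarrow> (('v \<Rightarrow> 'val) \<Rightarrow> ('v \<Rightarrow> 'val) \<Rightarrow> complex)" where
  "ghost_copy T Y X u enc \<rho> = (\<lambda>x y.
     if x \<in> cl_graph T (Y \<union> {u}) X u enc \<and> y \<in> cl_graph T (Y \<union> {u}) X u enc
     then \<rho> (restr Y x) (restr Y y) else 0)"

lemma mixed_ghost_copy:
  assumes "mixed T Y \<rho>" and "X \<subseteq> Y" and "u \<notin> Y"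
  shows "mixed T (Y \<union> {u}) (ghost_copy T Y X u enc \<rho>)"
  unfolding ghost_copy_def
  using assms restr_inj_on_cl_graph
  by (intro mixed_pullback) (auto simp: cl_graph_def intro: restr_in_asg)

lemma supp_ghost_copy:
  assumes "mixed T Y \<rho>" and "X \<subseteq> Y" and "u \<notin> Y"
  shows "supp T (Y \<union> {u}) (ghost_copy T Y X u enc \<rho>) \<subseteq> cl_eq T (Y \<union> {u}) X u enc"
proof -
  have "cl_eq T (Y \<union> {u}) X u enc = ell2_on T (Y \<union> {u}) (cl_graph T (Y \<union> {u}) X u enc)"
    using assms(2) by (intro cl_eq_eq_ell2_on) blast
  then show ?thesis
    using supp_subset_ell2_on_iff[OF mixed_ghost_copy[OF assms]] by (simp add: ghost_copy_def)
qed

lemma ptrace_ghost_copy: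
  assumes \<rho>: "mixed T Y \<rho>" and XY: "X \<subseteq> Y" and uY: "u \<notin> Y" and enc: "enc ` asg T X \<subseteq> T u"
    and block: "block_diagonal X \<rho>"
  shows "ptrace T Y {u} (ghost_copy T Y X u enc \<rho>) = \<rho>"
proof (intro ext)
  fix a b
  show "ptrace T Y {u} (ghost_copy T Y X u enc \<rho>) a b = \<rho> a b"
  proof (cases "a \<in> asg T Y \<and> b \<in> asg T Y")
    case False
    then show ?thesis using mixed_outside[OF \<rho>] by (auto simp: ptrace_def)
  next
    case True
    then have a: "a \<in> asg T Y" and b: "b \<in> asg T Y" by auto
    define c0 where "c0 = (\<lambda>_. undefined)(u := enc (restr X a))"
    have c0: "c0 \<in> asg T {u}"
      using enc restr_in_asg[OF a XY] unfolding c0_def by (blast intro: fun_upd_undefined_in_asg)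
    have "ghost_copy T Y X u enc \<rho> (merge {u} a c) (merge {u} b c) = (if c = c0 then \<rho> a b else 0)"
      if c: "c \<in> asg T {u}" for c
    proof -
      have "c = c0 \<longleftrightarrow> c u = enc (restr X a)"
        using asg_singleton_eqI[OF c c0] by (auto simp: c0_def)
      moreover have "restr Y (merge {u} a c) = a" and "restr Y (merge {u} b c) = b"
        using uY by (simp_all add: restr_merge_asg[OF a] restr_merge_asg[OF b])
      moreover have "\<rho> a b = 0" if "enc (restr X a) \<noteq> enc (restr X b)"
        using block that unfolding block_diagonal_def by metis
      ultimately show ?thesis
        unfolding ghost_copy_def
          merge_in_cl_graph_iff[OF a c XY uY] merge_in_cl_graph_iff[OF b c XY uY]
        by auto
    qed
    then have "ptrace T Y {u} (ghost_copy T Y X u enc \<rho>) a b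
        = (\<Sum>\<^sub>\<infinity>c\<in>asg T {u}. if c = c0 then \<rho> a b else 0)"
      using True by (simp add: ptrace_def cong: infsum_cong)
    also have "\<dots> = \<rho> a b"
      by (rule infsumI, rule has_sum_finite_neutralI[of "{c0}"]) (use c0 in auto)
    finally show ?thesis .
  qed
qed

lemma separable_ghost_copy:
  assumes \<rho>: "mixed T Y \<rho>" and XY: "X \<subseteq> Y" and uY: "u \<notin> Y" and enc: "enc ` asg T X \<subseteq> T u"
    and block: "block_diagonal X \<rho>"
  shows "separable T Y {u} (ghost_copy T Y X u enc \<rho>)"
proof -
  define I where "I = restr X ` {a. \<rho> a a \<noteq> 0}"
  define B where "B i = (\<lambda>a b.
      if a \<in> {a \<in> asg T Y. restr X a = i} \<and> b \<in> {a \<in> asg T Y. restr X a = i} then \<rho> a b else 0)"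
    for i
  define e where "e i = (\<lambda>_. undefined)(u := enc i)" for i
  define L where "L i = (\<lambda>v w. if v = e i \<and> w = e i then 1 else (0::complex))" for i
  have "{a. \<rho> a a \<noteq> 0} = {a \<in> UNIV. Re (\<rho> a a) \<noteq> 0}"
    using mixed_diag(1)[OF \<rho>] by (auto simp: complex_eq_iff)
  then have I: "countable I"
    unfolding I_def using summable_countable_real[OF mixed_diag_summable[OF \<rho>]] by simp
  have IX: "I \<subseteq> asg T X"
    unfolding I_def using mixed_outside[OF \<rho>] XY by (auto intro: restr_in_asg)
  have B: "mixed T Y (B i)" for i
    unfolding B_def by (rule mixed_pullback[OF \<rho>, where h = "\<lambda>x. x"]) auto
  have L: "mixed T {u} (L i)" if "i \<in> I" for i
    unfolding L_def e_def
    by (rule mixed_basis_projection, rule fun_upd_undefined_in_asg) (use that IX enc in blast)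
  have tensor: "tensor T Y {u} (B i) (L i) x y
      = (if restr X x = i \<and> restr X y = i then ghost_copy T Y X u enc \<rho> x y else 0)" for i x y
  proof (cases "x \<in> asg T (Y \<union> {u}) \<and> y \<in> asg T (Y \<union> {u})")
    case True
    then have "restr Y x \<in> asg T Y" and "restr Y y \<in> asg T Y" by (auto intro: restr_in_asg)
    moreover have "restr {u} z = e i \<longleftrightarrow> z u = enc i" for z
      by (auto simp: restr_singleton e_def dest: fun_upd_eqD)
    ultimately show ?thesis
      using True
      by (simp add: tensor_def ghost_copy_def cl_graph_def B_def L_def restr_restr[OF XY])
  qed (auto simp: tensor_def ghost_copy_def cl_graph_def)
  have blocks: "((\<lambda>i. if restr X x = i \<and> restr X y = i then ghost_copy T Y X u enc \<rho> x y else 0)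
      has_sum ghost_copy T Y X u enc \<rho> x y) I" for x y
  proof (rule has_sum_if_eq_both)
    assume "ghost_copy T Y X u enc \<rho> x y \<noteq> 0"
    then have nz: "\<rho> (restr Y x) (restr Y y) \<noteq> 0" by (simp add: ghost_copy_def split: if_splits)
    then have "restr X (restr Y x) = restr X (restr Y y)"
      using block unfolding block_diagonal_def by blast
    then have "restr X x = restr X y" by (simp only: restr_restr[OF XY])
    moreover have "restr Y x \<in> {a. \<rho> a a \<noteq> 0}" using mixed_diag_nonzero[OF \<rho>, OF nz] by simp
    then have "restr X x \<in> I" unfolding I_def
      by (rule image_eqI[where f = "restr X", rotated]) (simp add: restr_restr[OF XY])
    ultimately show "restr X x = restr X y \<and> restr X x \<in> I" by blast
  qed
  show ?thesis
  proof (rule separable_countable_sum[OF I])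
    show "mixed T Y (B i)" for i by (rule B)
    show "mixed T {u} (L i)" if "i \<in> I" for i using that by (rule L)
    show "((\<lambda>i. tensor T Y {u} (B i) (L i) x y) has_sum ghost_copy T Y X u enc \<rho> x y) I" for x y
      unfolding tensor by (rule blocks)
  qed
qed

lemma block_diagonal_if_sat_cl_eq:
  fixes T :: "'v \<Rightarrow> 'val set"
  assumes sat: "sat T Y {} {u} (cl_eq T (Y \<union> {u}) X u enc) \<rho>"
    and XY: "X \<subseteq> Y" and uY: "u \<notin> Y" and enc: "inj_on enc (asg T X)"
  shows "block_diagonal X \<rho>"
  unfolding block_diagonal_def
proof (intro allI impI)
  let ?G = "cl_graph T (Y \<union> {u}) X u enc"
  fix a b :: "'v \<Rightarrow> 'val"
  assume ne: "restr X a \<noteq> restr X b"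
  obtain \<rho>o where \<rho>o: "mixed T (Y \<union> {u}) \<rho>o"
    and supp: "supp T (Y \<union> {u}) \<rho>o \<subseteq> cl_eq T (Y \<union> {u}) X u enc" and tr: "ptrace T Y {u} \<rho>o = \<rho>"
    using sat unfolding sat_def by auto
  have "cl_eq T (Y \<union> {u}) X u enc = ell2_on T (Y \<union> {u}) ?G"
    using XY by (intro cl_eq_eq_ell2_on) blast
  then have "\<rho>o x y = 0" if "x \<notin> ?G" for x y
    using supp supp_subset_ell2_on_iff[OF \<rho>o] that by auto
  then have off_graph: "\<rho>o x y = 0" if "x \<notin> ?G \<or> y \<notin> ?G" for x y
    using that mixed_hermitian[OF \<rho>o, of x y] by auto
  have "ptrace T Y {u} \<rho>o a b = 0"
    using off_graph XY uY enc ne by (rule ptrace_vanishes_across_blocks)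
  then show "\<rho> a b = 0" by (simp add: tr)
qed

lemma sat_cl_eq_if_block_diagonal:
  assumes "mixed T Y \<rho>" and "X \<subseteq> Y" and "u \<notin> Y" and "enc ` asg T X \<subseteq> T u"
    and "block_diagonal X \<rho>"
  shows "sat T Y {} {u} (cl_eq T (Y \<union> {u}) X u enc) \<rho>"
  unfolding sat_def Un_empty_right Un_empty_left using assms
  by (intro exI[of _ "ghost_copy T Y X u enc \<rho>"] conjI mixed_ghost_copy separable_ghost_copy
      supp_ghost_copy ptrace_ghost_copy)

theorem lemma9:
  fixes T :: "'v \<Rightarrow> 'val set" and Y X :: "'v set" and u :: 'v
    and enc :: "('v \<Rightarrow> 'val) \<Rightarrow> 'val"
    and \<rho> :: "('v \<Rightarrow> 'val) \<Rightarrow> ('v \<Rightarrow> 'val) \<Rightarrow> complex"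
  assumes "mixed T Y \<rho>" and "X \<subseteq> Y" and "u \<notin> Y"
    and "bij_betw enc (asg T X) (T u)"
  shows "sat T Y {} {u} (cl_eq T (Y \<union> {u}) X u enc) \<rho> \<longleftrightarrow> classical_in T Y X \<rho>"
proof -
  have inj: "inj_on enc (asg T X)" and enc: "enc ` asg T X \<subseteq> T u"
    using assms(4) by (auto simp: bij_betw_def)
  have "sat T Y {} {u} (cl_eq T (Y \<union> {u}) X u enc) \<rho> \<longleftrightarrow> block_diagonal X \<rho>"
  proof
    assume "sat T Y {} {u} (cl_eq T (Y \<union> {u}) X u enc) \<rho>"
    then show "block_diagonal X \<rho>" by (rule block_diagonal_if_sat_cl_eq[OF _ assms(2,3) inj])
  next
    assume "block_diagonal X \<rho>"
    then show "sat T Y {} {u} (cl_eq T (Y \<union> {u}) X u enc) \<rho>"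
      by (rule sat_cl_eq_if_block_diagonal[OF assms(1-3) enc])
  qed
  also have "\<dots> \<longleftrightarrow> classical_in T Y X \<rho>"
    using classical_in_iff_block_diagonal[OF assms(1,2)] by simp
  finally show ?thesis .
qed

end
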